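(* Let $a$ be a tile of an additive poset $A$ and let $I$ be the set of all atoms of $A$ lying in the tail $A_a$. Then the map $2^I_f\to A$, $J\mapsto\sum_{j\in J} j$, is an isomorphism of additive posets from the restricted additive powerset $2^I_f$ onto the additive subposet of $A_a$ generated by $I$ as a $\mathbb{Z}/2\mathbb{Z}$-vector space.
   Context: An additive poset is a pair $(A,\le)$ where $A$ is an abelian group and $\le$ is a partial order on $A$ such that for all $a,b,c\in A$: $(\ast)$ if $b\le a$ and $c\le a$ then $b+c\le a$; $(\ast\ast)$ if $a\le b$ and $a\le c$ then $a\le a+b+c$. Every subgroup with the restricted order is an additive poset (an additive subposet). An isomorphism of additive posets is a bijection that is both a group isomorphism and an order isomorphism. The tail of $a$ is $A_a=\{x:x\le a\}$. Elements $x,y$ are independent if $x\le x+y$. An atom is a nonzero $x$ with $A_x=\{0,x\}$. A tile is a nonzero $a$ such that any two distinct atoms of $A$ in $A_a$ are independent. For a set $I$, $2^I_f$ is the set of finite subsets of $I$ with symmetric difference as addition and inclusion as partial order. *)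

theory Defs
  imports Main
begin

definition additive_poset :: "('a::ab_group_add \<Rightarrow> 'a \<Rightarrow> bool) \<Rightarrow> bool" where
  "additive_poset le \<longleftrightarrow>
     (\<forall>x. le x x) \<and> (\<forall>x y. le x y \<and> le y x \<longrightarrow> x = y) \<and>
     (\<forall>x y z. le x y \<and> le y z \<longrightarrow> le x z) \<and>
     (\<forall>a b c. le b a \<and> le c a \<longrightarrow> le (b + c) a) \<and>
     (\<forall>a b c. le a b \<and> le a c \<longrightarrow> le a (a + b + c))"

definition tail :: "('a \<Rightarrow> 'a \<Rightarrow> bool) \<Rightarrow> 'a \<Rightarrow> 'a set" where
  "tail le a = {x. le x a}"

definition independent :: "('a::ab_group_add \<Rightarrow> 'a \<Rightarrow> bool) \<Rightarrow> 'a \<Rightarrow> 'a \<Rightarrow> bool" where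
  "independent le x y \<longleftrightarrow> le x (x + y)"

definition atom :: "('a::ab_group_add \<Rightarrow> 'a \<Rightarrow> bool) \<Rightarrow> 'a \<Rightarrow> bool" where
  "atom le x \<longleftrightarrow> x \<noteq> 0 \<and> tail le x = {0, x}"

definition tile :: "('a::ab_group_add \<Rightarrow> 'a \<Rightarrow> bool) \<Rightarrow> 'a \<Rightarrow> bool" where
  "tile le a \<longleftrightarrow> a \<noteq> 0 \<and>
     (\<forall>x y. atom le x \<and> atom le y \<and> x \<in> tail le a \<and> y \<in> tail le a \<and> x \<noteq> y
        \<longrightarrow> independent le x y)"

text \<open>Finite subsets of I (carrier of the additive powerset 2^I_f), with symmetric difference.\<close>
definition fin_subsets :: "'b set \<Rightarrow> 'b set set" where
  "fin_subsets I = {J. finite J \<and> J \<subseteq> I}"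

definition symdiff :: "'b set \<Rightarrow> 'b set \<Rightarrow> 'b set" where
  "symdiff J K = (J - K) \<union> (K - J)"

text \<open>The subgroup generated by a set S (for elements of order 2, as here, this is
  the Z/2Z-span of S).\<close>
inductive_set gen_subgroup :: "'a::ab_group_add set \<Rightarrow> 'a set" for S where
  zero: "0 \<in> gen_subgroup S"
| gen: "x \<in> S \<Longrightarrow> x \<in> gen_subgroup S"
| add: "x \<in> gen_subgroup S \<Longrightarrow> y \<in> gen_subgroup S \<Longrightarrow> x + y \<in> gen_subgroup S"
| neg: "x \<in> gen_subgroup S \<Longrightarrow> - x \<in> gen_subgroup S"

definition addposet_iso ::
  "'b set \<Rightarrow> ('b \<Rightarrow> 'b \<Rightarrow> 'b) \<Rightarrow> ('b \<Rightarrow> 'b \<Rightarrow> bool) \<Rightarrow>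
   'c set \<Rightarrow> ('c \<Rightarrow> 'c \<Rightarrow> 'c) \<Rightarrow> ('c \<Rightarrow> 'c \<Rightarrow> bool) \<Rightarrow> ('b \<Rightarrow> 'c) \<Rightarrow> bool" where
  "addposet_iso B addB leB C addC leC f \<longleftrightarrow>
     bij_betw f B C \<and>
     (\<forall>x\<in>B. \<forall>y\<in>B. f (addB x y) = addC (f x) (f y)) \<and>
     (\<forall>x\<in>B. \<forall>y\<in>B. leB x y \<longleftrightarrow> leC (f x) (f y))"

end

theory Submission
  imports Defs
begin

text \<open>Axiom (*) with b = c = a gives 3a \<le> a and axiom (**) gives a \<le> 3a, so every element
  of an additive poset has order at most two. Hence the subgroup generated by a set I of atoms
  is the set of finite subset sums of I, and symmetric difference of index sets corresponds to
  addition. If the atoms in I are pairwise independent, an atom j \<in> I lies below a subset sum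
  exactly when it occurs in it: independence of j from the other summands makes it lie below,
  while j \<le> \<Sigma>K with j \<notin> K together with j \<le> j + \<Sigma>K forces j \<le> 0 by (**).
  So the subset order is reflected, and the sum map is injective.\<close>

lemma additive_poset_refl: "additive_poset le \<Longrightarrow> le x x"
  by (simp add: additive_poset_def)

lemma additive_poset_antisym: "additive_poset le \<Longrightarrow> le x y \<Longrightarrow> le y x \<Longrightarrow> x = y"
  unfolding additive_poset_def by blast

lemma additive_poset_trans: "additive_poset le \<Longrightarrow> le x y \<Longrightarrow> le y z \<Longrightarrow> le x z"
  unfolding additive_poset_def by blast

lemma additive_poset_add_le: "additive_poset le \<Longrightarrow> le b a \<Longrightarrow> le c a \<Longrightarrow> le (b + c) a"
  unfolding additive_poset_def by blast

lemma additive_poset_le_add: "additive_poset le \<Longrightarrow> le a b \<Longrightarrow> le a c \<Longrightarrow> le a (a + b + c)"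
  unfolding additive_poset_def by blast

lemma additive_poset_add_self:
  fixes le :: "'a::ab_group_add \<Rightarrow> 'a \<Rightarrow> bool" and x :: 'a
  assumes le: "additive_poset le"
  shows "x + x = 0"
proof -
  have refl: "le x x" using additive_poset_refl[OF le] .
  have "le (x + x + x) x"
    using additive_poset_add_le[OF le additive_poset_add_le[OF le refl refl] refl] .
  moreover have "le x (x + x + x)" using additive_poset_le_add[OF le refl refl] .
  ultimately have "x + x + x = x" using additive_poset_antisym[OF le] by blast
  then show ?thesis by (metis add_right_imp_eq add_0)
qed

lemma additive_poset_zero_le: "additive_poset le \<Longrightarrow> le 0 x"
  using additive_poset_add_le[of le x x x] additive_poset_refl[of le x]
    additive_poset_add_self[of le x] by simp

lemma sum_le_additive_poset:
  assumes le: "additive_poset le" and "finite S" "\<forall>k\<in>S. le k a"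
  shows "le (\<Sum>S) a"
  using assms(2,3)
proof (induction S rule: finite_induct)
  case empty
  then show ?case using additive_poset_zero_le[OF le] by simp
next
  case (insert x F)
  then show ?case using additive_poset_add_le[OF le] by (simp add: add.commute)
qed

lemma independent_sum:
  assumes le: "additive_poset le" and "finite S" "\<forall>k\<in>S. independent le j k"
  shows "independent le j (\<Sum>S)"
  using assms(2,3) unfolding independent_def
proof (induction S rule: finite_induct)
  case empty
  then show ?case using additive_poset_refl[OF le] by simp
next
  case (insert x F)
  then have "le j (j + (j + \<Sum>F) + (j + x))" using additive_poset_le_add[OF le] by simp
  moreover have "j + (j + \<Sum>F) + (j + x) = j + (x + \<Sum>F)"
    using additive_poset_add_self[OF le, of j] by (simp add: algebra_simps)
  ultimately show ?case using insert by simp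
qed

lemma sum_symdiff:
  fixes J K :: "'a::ab_group_add set"
  assumes order_two: "\<And>x::'a. x + x = 0" and "finite J" "finite K"
  shows "\<Sum>(symdiff J K) = \<Sum>J + \<Sum>K"
proof -
  have J: "\<Sum>J = \<Sum>(J - K) + \<Sum>(J \<inter> K)"
    using sum.Int_Diff[OF assms(2), of "\<lambda>x. x" K] by (simp add: add.commute)
  have K: "\<Sum>K = \<Sum>(K - J) + \<Sum>(J \<inter> K)"
    using sum.Int_Diff[OF assms(3), of "\<lambda>x. x" J] by (simp add: add.commute Int_commute)
  have "\<Sum>(symdiff J K) = \<Sum>(J - K) + \<Sum>(K - J)"
    unfolding symdiff_def by (rule sum.union_disjoint) (use assms in auto)
  also have "\<dots> = \<Sum>J + \<Sum>K"
    using J K order_two[of "\<Sum>(J \<inter> K)"] by (simp add: algebra_simps)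
  finally show ?thesis .
qed

lemma gen_subgroup_order_two_eq_sums:
  fixes S :: "'a::ab_group_add set"
  assumes order_two: "\<And>x::'a. x + x = 0"
  shows "gen_subgroup S = (\<lambda>J. \<Sum>J) ` fin_subsets S"
proof
  show "gen_subgroup S \<subseteq> (\<lambda>J. \<Sum>J) ` fin_subsets S"
  proof
    fix x assume "x \<in> gen_subgroup S"
    then show "x \<in> (\<lambda>J. \<Sum>J) ` fin_subsets S"
    proof (induction rule: gen_subgroup.induct)
      case zero
      show ?case by (rule image_eqI[of _ _ "{}"]) (auto simp: fin_subsets_def)
    next
      case (gen x)
      then show ?case by (intro image_eqI[of _ _ "{x}"]) (auto simp: fin_subsets_def)
    next
      case (add x y)
      then obtain J K where "J \<in> fin_subsets S" "K \<in> fin_subsets S" "x = \<Sum>J" "y = \<Sum>K"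
        by blast
      then show ?case using sum_symdiff[OF order_two, of J K]
        by (intro image_eqI[of _ _ "symdiff J K"]) (auto simp: fin_subsets_def symdiff_def)
    next
      case (neg x)
      moreover have "- x = x" using order_two[of x] by (simp add: add_eq_0_iff)
      ultimately show ?case by simp
    qed
  qed
next
  have "\<Sum>J \<in> gen_subgroup S" if "finite J" "J \<subseteq> S" for J
    using that by (induction J rule: finite_induct) (auto intro: gen_subgroup.intros)
  then show "(\<lambda>J. \<Sum>J) ` fin_subsets S \<subseteq> gen_subgroup S"
    unfolding fin_subsets_def by blast
qed

lemma le_sum_iff_mem:
  assumes le: "additive_poset le" and indep: "pairwise (independent le) I" and "0 \<notin> I"
    and "j \<in> I" "finite K" "K \<subseteq> I"
  shows "le j (\<Sum>K) \<longleftrightarrow> j \<in> K"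
proof -
  have "\<forall>k\<in>K - {j}. independent le j k"
    using pairwiseD[OF indep \<open>j \<in> I\<close>] \<open>K \<subseteq> I\<close> by blast
  then have indep_rest: "le j (j + \<Sum>(K - {j}))"
    using independent_sum[OF le] \<open>finite K\<close> unfolding independent_def by blast
  show ?thesis
  proof
    assume below: "le j (\<Sum>K)"
    show "j \<in> K"
    proof (rule ccontr)
      assume "j \<notin> K"
      then have "le j (j + \<Sum>K)" using indep_rest by simp
      then have "le j (j + \<Sum>K + (j + \<Sum>K))" by (rule additive_poset_le_add[OF le below])
      then have "le j 0" unfolding additive_poset_add_self[OF le] .
      then have "j = 0" using additive_poset_antisym[OF le _ additive_poset_zero_le[OF le]] by blast
      with \<open>0 \<notin> I\<close> \<open>j \<in> I\<close> show False by simp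
    qed
  next
    assume "j \<in> K"
    then have "\<Sum>K = j + \<Sum>(K - {j})" using \<open>finite K\<close> by (simp add: sum.remove)
    then show "le j (\<Sum>K)" using indep_rest by simp
  qed
qed

lemma sum_le_sum_iff_subset:
  assumes le: "additive_poset le" and indep: "pairwise (independent le) I" and "0 \<notin> I"
    and J: "J \<in> fin_subsets I" and K: "K \<in> fin_subsets I"
  shows "le (\<Sum>J) (\<Sum>K) \<longleftrightarrow> J \<subseteq> K"
proof -
  have mem_iff: "le j (\<Sum>L) \<longleftrightarrow> j \<in> L" if "j \<in> I" "L \<in> fin_subsets I" for j L
    using le_sum_iff_mem[OF le indep \<open>0 \<notin> I\<close>] that unfolding fin_subsets_def by blast
  show ?thesis
  proof
    assume below: "le (\<Sum>J) (\<Sum>K)"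
    show "J \<subseteq> K"
    proof
      fix j assume "j \<in> J"
      moreover have "j \<in> I" using \<open>j \<in> J\<close> J unfolding fin_subsets_def by blast
      ultimately have "le j (\<Sum>J)" using mem_iff J by blast
      then have "le j (\<Sum>K)" using additive_poset_trans[OF le _ below] by blast
      then show "j \<in> K" using mem_iff \<open>j \<in> I\<close> K by blast
    qed
  next
    assume "J \<subseteq> K"
    then show "le (\<Sum>J) (\<Sum>K)"
      using J K mem_iff sum_le_additive_poset[OF le, of J "\<Sum>K"]
      unfolding fin_subsets_def by blast
  qed
qed

theorem theorem5p2:
  fixes le :: "'a::ab_group_add \<Rightarrow> 'a \<Rightarrow> bool" and a :: 'a
  assumes "additive_poset le"
    and "tile le a"
  defines "I \<equiv> {x. atom le x \<and> x \<in> tail le a}"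
  shows "addposet_iso (fin_subsets I) symdiff (\<subseteq>)
           (gen_subgroup I) (+) le (\<lambda>J. \<Sum>j\<in>J. j)"
proof -
  note le = assms(1)
  note order_two = additive_poset_add_self[OF le]
  have indep: "pairwise (independent le) I"
    using assms(2) unfolding pairwise_def I_def tile_def by blast
  have "0 \<notin> I" unfolding I_def atom_def by blast
  note order_iff = sum_le_sum_iff_subset[OF le indep \<open>0 \<notin> I\<close>]
  have "inj_on (\<lambda>J. \<Sum>J) (fin_subsets I)"
    by (rule inj_onI) (metis order_iff additive_poset_refl[OF le] subset_antisym)
  then have "bij_betw (\<lambda>J. \<Sum>J) (fin_subsets I) (gen_subgroup I)"
    by (simp add: bij_betw_def gen_subgroup_order_two_eq_sums[OF order_two])
  moreover have "\<Sum>(symdiff J K) = \<Sum>J + \<Sum>K" if "J \<in> fin_subsets I" "K \<in> fin_subsets I" for J K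
    using sum_symdiff[OF order_two] that unfolding fin_subsets_def by blast
  ultimately show ?thesis
    unfolding addposet_iso_def using order_iff by auto
qed

end
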